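(* Let $n\ge2$ and $\mu\in(0,\frac1n(\frac{n-1}{n})^{n-1})$. Let $\mathcal{D}(\mu)\subset\mathbb{R}^{n+1}$ be the Euclidean Delaunay unduloid with profile $f$, normalized so that $f(0)=a_-(\mu)$, and with period $T(\mu)$. Let $$a(x)=(1+f'(x)^2)^{-1/2}f'(x),$$ regarded as a function on $\mathcal{D}(\mu)$. Then: 1. $(\Delta-V)a=0$ on $\mathcal{D}(\mu)$; 2. $a$ vanishes exactly at the points $x=kT(\mu)/2$, $k\in\mathbb{Z}$; 3. $a'$ has exactly two zeros $\zeta_1(\mu),\zeta_2(\mu)$ in $[0,T(\mu)]$, and they satisfy $0<\zeta_1(\mu)<T(\mu)/2<\zeta_2(\mu)<T(\mu)$.
   Context: For $\mu\in(0,\frac1n(\frac{n-1}{n})^{n-1})$, $f$ is a nonconstant positive solution on $\mathbb{R}$ of $\mu=f^{n-1}(1+f'^2)^{-1/2}-f^n$. The unduloid $\mathcal{D}(\mu)$ is parametrized by $F(x,\omega)=(x,f(x)\omega)$, $\omega\in S^{n-1}$; it has constant mean curvature $1$ with respect to the unit normal $N=(1+f'^2)^{-1/2}(f',-\omega)$. The function $f$ oscillates between $a_-(\mu)$ and $a_+(\mu)$, the two positive roots of $X^n-X^{n-1}+\mu=0$. It is $T(\mu)$-periodic, where $T(\mu)$ is the distance between consecutive minima. $\Delta$ is the non-negative Laplace–Beltrami operator of the induced metric, and $V=\|B\|^2=n(1+(n-1)\mu^2f^{-2n})$. Note that $a=\langle N,(1,0,\dots,0)\rangle$. *)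

theory Defs
  imports "HOL-Analysis.Analysis"
begin

definition undul_roots :: "nat \<Rightarrow> real \<Rightarrow> real set" where
  "undul_roots n \<mu> = {X. X > 0 \<and> X ^ n - X ^ (n - 1) + \<mu> = 0}"

definition a_minus :: "nat \<Rightarrow> real \<Rightarrow> real" where
  "a_minus n \<mu> = Inf (undul_roots n \<mu>)"

definition a_plus :: "nat \<Rightarrow> real \<Rightarrow> real" where
  "a_plus n \<mu> = Sup (undul_roots n \<mu>)"

definition is_local_min :: "(real \<Rightarrow> real) \<Rightarrow> real \<Rightarrow> bool" where
  "is_local_min f t \<longleftrightarrow> (\<exists>e>0. \<forall>y. \<bar>y - t\<bar> < e \<longrightarrow> f t \<le> f y)"

text \<open>Period T(mu): distance between consecutive minima of the profile. With the
  normalization f(0) = a_-(mu) (a minimum), this is the first positive minimum.\<close>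
definition undul_period :: "(real \<Rightarrow> real) \<Rightarrow> real" where
  "undul_period f = Inf {t. t > 0 \<and> is_local_min f t}"

text \<open>The function a = (1+f'^2)^(-1/2) f' (the first component of the unit normal).\<close>
definition undul_a :: "(real \<Rightarrow> real) \<Rightarrow> real \<Rightarrow> real" where
  "undul_a f x = deriv f x / sqrt (1 + (deriv f x)^2)"

text \<open>Potential V = |B|^2 = n (1 + (n-1) mu^2 f^(-2n)).\<close>
definition undul_V :: "nat \<Rightarrow> real \<Rightarrow> (real \<Rightarrow> real) \<Rightarrow> real \<Rightarrow> real" where
  "undul_V n \<mu> f x = real n * (1 + (real n - 1) * \<mu>^2 / (f x) ^ (2 * n))"

text \<open>Non-negative Laplace-Beltrami operator of the induced metric
  g = (1 + f'^2) dx^2 + f^2 g_{S^(n-1)} on the hypersurface of revolution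
  F(x,omega) = (x, f(x) omega), applied to a function u depending on x only:
  Delta u = -(1/sqrt(det g)) d/dx (sqrt(det g) g^{xx} u'), sqrt(det g) = f^(n-1) sqrt(1+f'^2) (times
  the sphere density, which cancels).\<close>
definition rot_laplacian :: "nat \<Rightarrow> (real \<Rightarrow> real) \<Rightarrow> (real \<Rightarrow> real) \<Rightarrow> real \<Rightarrow> real" where
  "rot_laplacian n f u x =
     - (1 / ((f x) ^ (n - 1) * sqrt (1 + (deriv f x)^2))) *
       deriv (\<lambda>y. (f y) ^ (n - 1) / sqrt (1 + (deriv f y)^2) * deriv u y) x"

end

theory Submission
  imports Defs
begin

(*
  The profile equation says that the cosine 1/sqrt(1 + f'^2) of the slope angle of the profile
  equals g(f) = mu/f^(n-1) + f.  Hence f takes its values in [a_-, a_+], where g <= 1, and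
  a = f' g(f).  Differentiating gives f' (a' + g'(f)) = 0, and since f is not constant this
  forces a' = -g'(f) everywhere; in particular f'' = F(f) with F = -g'/g^3 Lipschitz, so by
  uniqueness for this autonomous equation f is symmetric about each of its critical points.
  Consequently f increases from a_- at 0 to a_+ at its first positive critical point T/2 and is
  even and T-periodic, the zeros of a are those of f', and the zeros of a' = -g'(f) are the
  points where f passes the minimum point of g, once in (0, T/2) and once in (T/2, T).
  The equation (Delta - V) a = 0 is a direct computation from a' = -g'(f).
*)

lemma power_pred_eq: "(t::real) \<noteq> 0 \<Longrightarrow> t ^ (j - Suc 0) = (if j = 0 then 1 else t ^ j / t)"
  by (cases j) auto

lemma lipschitz_on_interval_if_continuous_deriv:
  fixes F F' :: "real \<Rightarrow> real"
  assumes F': "\<And>t. t \<in> {a..b} \<Longrightarrow> (F has_real_derivative F' t) (at t)"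
    and cont: "continuous_on {a..b} F'"
  obtains L where "L-lipschitz_on {a..b} F"
proof -
  have "bounded (F' ` {a..b})"
    by (intro compact_imp_bounded compact_continuous_image cont compact_Icc)
  then obtain B where B: "\<And>t. t \<in> {a..b} \<Longrightarrow> norm (F' t) \<le> B"
    unfolding bounded_iff by blast
  have "(max B 0)-lipschitz_on {a..b} F"
  proof (rule lipschitz_onI)
    fix x y assume "x \<in> {a..b}" "y \<in> {a..b}"
    then show "dist (F x) (F y) \<le> max B 0 * dist x y"
      unfolding dist_norm
      by (intro field_differentiable_bound[of "{a..b}" F F'])
        (use B in \<open>auto intro!: has_field_derivative_at_within F' simp: le_max_iff_disj\<close>)
  qed simp
  then show ?thesis by (rule that)
qed

lemma gronwall_zero:
  fixes E E' :: "real \<Rightarrow> real"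
  assumes E': "\<And>y. (E has_real_derivative E' y) (at y)"
    and bound: "\<And>y. \<bar>E' y\<bar> \<le> K * E y"
    and nonneg: "\<And>y. 0 \<le> E y"
    and zero: "E x0 = 0"
  shows "E x = 0"
proof (cases "x0 \<le> x")
  case True
  have "E x * exp (- K * x) \<le> E x0 * exp (- K * x0)"
  proof (rule DERIV_nonpos_imp_nonincreasing[OF True])
    fix y
    have "((\<lambda>y. E y * exp (- K * y)) has_real_derivative (E' y - K * E y) * exp (- K * y)) (at y)"
      by (auto intro!: derivative_eq_intros E' simp: algebra_simps)
    moreover have "(E' y - K * E y) * exp (- K * y) \<le> 0"
      using bound[of y] by (intro mult_nonpos_nonneg) auto
    ultimately show "\<exists>d. ((\<lambda>y. E y * exp (- K * y)) has_real_derivative d) (at y) \<and> d \<le> 0"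
      by blast
  qed
  then show ?thesis using zero nonneg[of x] by (simp add: mult_le_0_iff)
next
  case False
  have "E x * exp (K * x) \<le> E x0 * exp (K * x0)"
  proof (rule DERIV_nonneg_imp_nondecreasing[of x x0 "\<lambda>y. E y * exp (K * y)"])
    show "x \<le> x0" using False by simp
  next
    fix y
    have "((\<lambda>y. E y * exp (K * y)) has_real_derivative (E' y + K * E y) * exp (K * y)) (at y)"
      by (auto intro!: derivative_eq_intros E' simp: algebra_simps)
    moreover have "0 \<le> (E' y + K * E y) * exp (K * y)"
      using bound[of y] by (intro mult_nonneg_nonneg) auto
    ultimately show "\<exists>d. ((\<lambda>y. E y * exp (K * y)) has_real_derivative d) (at y) \<and> 0 \<le> d"
      by blast
  qed
  then show ?thesis using zero nonneg[of x] by (simp add: mult_le_0_iff)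
qed

lemma autonomous_second_order_unique:
  fixes u u' w w' F :: "real \<Rightarrow> real"
  assumes u: "\<And>x. (u has_real_derivative u' x) (at x)"
    and u': "\<And>x. (u' has_real_derivative F (u x)) (at x)"
    and w: "\<And>x. (w has_real_derivative w' x) (at x)"
    and w': "\<And>x. (w' has_real_derivative F (w x)) (at x)"
    and range: "\<And>x. u x \<in> S" "\<And>x. w x \<in> S"
    and lip: "L-lipschitz_on S F"
    and init: "u a = w a" "u' a = w' a"
  shows "u x = w x \<and> u' x = w' x"
proof -
  define E where "E y = (u y - w y)^2 + (u' y - w' y)^2" for y
  define E' where
    "E' y = 2 * (u y - w y) * (u' y - w' y) + 2 * (u' y - w' y) * (F (u y) - F (w y))" for y
  have "(E has_real_derivative E' y) (at y)" for y
    unfolding E_def[abs_def] E'_def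
    by (auto intro!: derivative_eq_intros u u' w w' simp: algebra_simps)
  moreover have "\<bar>E' y\<bar> \<le> (1 + L) * E y" for y
  proof -
    define a b c where "a = u y - w y" and "b = u' y - w' y" and "c = F (u y) - F (w y)"
    have c: "\<bar>c\<bar> \<le> L * \<bar>a\<bar>"
      using lipschitz_onD[OF lip range(1,2)] unfolding a_def c_def dist_real_def .
    have "\<bar>E' y\<bar> = \<bar>2 * a * b + 2 * b * c\<bar>" unfolding E'_def a_def b_def c_def by simp
    also have "\<dots> \<le> 2 * \<bar>a\<bar> * \<bar>b\<bar> + 2 * \<bar>b\<bar> * \<bar>c\<bar>"
      by (simp add: abs_mult abs_triangle_ineq[THEN order_trans])
    also have "\<dots> \<le> (1 + L) * (2 * \<bar>a\<bar> * \<bar>b\<bar>)"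
      using mult_left_mono[OF c, of "2 * \<bar>b\<bar>"] by (simp add: algebra_simps)
    also have "\<dots> \<le> (1 + L) * (a^2 + b^2)"
      using sum_squares_bound[of "\<bar>a\<bar>" "\<bar>b\<bar>"] lipschitz_on_nonneg[OF lip]
      by (intro mult_left_mono) (auto simp: power2_abs)
    finally show ?thesis unfolding E_def a_def b_def .
  qed
  ultimately have "E x = 0"
    by (rule gronwall_zero) (use init in \<open>auto simp: E_def\<close>)
  then show ?thesis unfolding E_def by (simp add: add_nonneg_eq_0_iff)
qed

lemma continuous_cofactor_vanishes:
  fixes f p q h G :: "real \<Rightarrow> real"
  assumes f': "\<And>x. (f has_real_derivative p x) (at x)"
    and p': "\<And>x. (p has_real_derivative q x) (at x)"
    and h: "continuous_on UNIV h"
    and cofactor: "\<And>x. p x * h x = 0"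
    and h_eq: "\<And>x. p x = 0 \<Longrightarrow> q x = 0 \<Longrightarrow> h x = G (f x)"
    and nonconst: "f y \<noteq> f x0"
  shows "h x0 = 0"
proof (rule ccontr)
  assume hx0: "h x0 \<noteq> 0"
  define K where "K = insert y (closed_segment x0 y \<inter> {t. h t = 0})"
  have "closed K"
    unfolding K_def by (intro closed_insert closed_Int closed_segment closed_Collect_eq h) auto
  then obtain t0 where "t0 \<in> K" and nearest: "\<And>t. t \<in> K \<Longrightarrow> dist x0 t0 \<le> dist x0 t"
    using distance_attains_inf[of K x0] unfolding K_def by blast
  then have t0_seg: "t0 \<in> closed_segment x0 y" and t0_cases: "t0 = y \<or> h t0 = 0"
    unfolding K_def by auto
  have "x0 \<noteq> t0" using t0_cases hx0 nonconst by auto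
  \<comment> \<open>Strictly between x0 and the nearest zero of h (or y), h does not vanish, so f is flat.\<close>
  define U where "U = open_segment x0 t0"
  have pU: "p t = 0" if "t \<in> U" for t
  proof -
    have "t \<in> closed_segment x0 y"
      using that t0_seg closed_segment_subset[of x0 "closed_segment x0 y" t0]
      unfolding U_def by (auto simp: open_closed_segment)
    moreover have "dist x0 t < dist x0 t0"
      using dist_in_open_segment[of t x0 t0] that unfolding U_def by (simp add: dist_commute)
    ultimately have "h t \<noteq> 0" using nearest[of t] unfolding K_def by force
    then show ?thesis using cofactor[of t] by simp
  qed
  have "open U" unfolding U_def open_segment_eq_real_ivl by auto
  have qU: "q t = 0" if "t \<in> U" for t
  proof -
    have "((\<lambda>_. 0) has_real_derivative q t) (at t)"
      by (rule has_field_derivative_transform_within_open[OF p' \<open>open U\<close> that]) (simp add: pU)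
    then show ?thesis using DERIV_unique[OF _ DERIV_const] by blast
  qed
  obtain c where fU: "\<And>t. t \<in> U \<Longrightarrow> f t = c"
    using has_field_derivative_zero_constant[of U f] pU f'
    by (metis U_def convex_open_segment has_field_derivative_at_within)
  have cl: "x0 \<in> closure U" "t0 \<in> closure U"
    unfolding U_def using \<open>x0 \<noteq> t0\<close> by (auto simp: closure_open_segment)
  have f_cont: "continuous_on (closure U) f"
    using DERIV_isCont[OF f'] by (intro continuous_at_imp_continuous_on) blast
  have h_cont: "continuous_on (closure U) h" using h continuous_on_subset by blast
  have "f x0 = c" "f t0 = c"
    using continuous_constant_on_closure[OF f_cont fU] cl by auto
  moreover have "h x0 = G c" "h t0 = G c"
    using continuous_constant_on_closure[OF h_cont, of "G c"] h_eq pU qU fU cl by auto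
  ultimately show False using t0_cases hx0 nonconst by auto
qed

lemma unbounded_if_deriv_ge_pos:
  fixes u u' :: "real \<Rightarrow> real"
  assumes u': "\<And>x. a \<le> x \<Longrightarrow> (u has_real_derivative u' x) (at x)"
    and ge: "\<And>x. a \<le> x \<Longrightarrow> \<kappa> \<le> u' x"
    and "0 < \<kappa>"
  shows "\<exists>x\<ge>a. B < u x"
proof -
  define x where "x = a + (\<bar>B\<bar> + \<bar>u a\<bar> + 1) / \<kappa>"
  have "a \<le> x" using \<open>0 < \<kappa>\<close> unfolding x_def by simp
  have "u a - \<kappa> * a \<le> u x - \<kappa> * x"
  proof (rule DERIV_nonneg_imp_nondecreasing[OF \<open>a \<le> x\<close>])
    fix y assume "a \<le> y"
    then show "\<exists>d. ((\<lambda>y. u y - \<kappa> * y) has_real_derivative d) (at y) \<and> 0 \<le> d"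
      using ge[of y] by (intro exI conjI) (auto intro!: derivative_eq_intros u')
  qed
  moreover have "\<kappa> * x = \<kappa> * a + \<bar>B\<bar> + \<bar>u a\<bar> + 1"
    using \<open>0 < \<kappa>\<close> unfolding x_def by (simp add: field_simps)
  ultimately show ?thesis using \<open>a \<le> x\<close> by (intro exI[of _ x]) auto
qed

lemma periodic_of_int:
  fixes \<phi> :: "real \<Rightarrow> 'b"
  assumes periodic: "\<And>x. \<phi> (x + c) = \<phi> x"
  shows "\<phi> (x + of_int j * c) = \<phi> x"
proof -
  have of_nat: "\<phi> (y + of_nat k * c) = \<phi> y" for y k
  proof (induction k)
    case (Suc k)
    then show ?case using periodic[of "y + of_nat k * c"] by (simp add: algebra_simps)
  qed simp
  show ?thesis
  proof (cases "0 \<le> j")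
    case True
    then show ?thesis using of_nat[of x "nat j"] by simp
  next
    case False
    then show ?thesis using of_nat[of "x + of_int j * c" "nat (- j)"] by simp
  qed
qed

section \<open>The function g\<close>

locale undul_param =
  fixes m :: nat and \<mu> :: real
  assumes m_pos: "1 \<le> m" and mu_pos: "0 < \<mu>"
    and mu_bound: "\<mu> < 1 / real (Suc m) * (real m / real (Suc m)) ^ m"
begin

text \<open>Here \<open>m = n - 1\<close>. The profile equation says that the cosine \<open>1 / sqrt (1 + f'^2)\<close>
  of the slope angle of the profile equals \<open>g (f x)\<close>.\<close>

definition g :: "real \<Rightarrow> real" where "g t = \<mu> / t ^ m + t"

definition g' :: "real \<Rightarrow> real" where "g' t = 1 - real m * \<mu> / t ^ Suc m"

definition t_crit :: real where "t_crit = root (Suc m) (real m * \<mu>)"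

definition F :: "real \<Rightarrow> real" where "F t = - g' t / g t ^ 3"

abbreviation "a_lo \<equiv> a_minus (Suc m) \<mu>"
abbreviation "a_hi \<equiv> a_plus (Suc m) \<mu>"

lemma g_has_derivative: "0 < t \<Longrightarrow> (g has_real_derivative g' t) (at t)"
  unfolding g_def[abs_def] g'_def
  by (auto intro!: derivative_eq_intros simp: field_simps power2_eq_square power_pred_eq)

lemma g_continuous_on: "0 < a \<Longrightarrow> continuous_on {a..b} g"
  by (rule DERIV_continuous_on[of _ _ g'])
    (auto intro!: has_field_derivative_at_within g_has_derivative)

lemma g_pos: "0 < t \<Longrightarrow> 0 < g t"
  unfolding g_def using mu_pos by (intro add_pos_pos divide_pos_pos zero_less_power)

lemma g'_mono: "0 < s \<Longrightarrow> s \<le> t \<Longrightarrow> g' s \<le> g' t"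
  unfolding g'_def using mu_pos power_mono[of s t "Suc m"]
  by (auto intro!: divide_left_mono)

lemma t_crit_pos: "0 < t_crit"
  using m_pos mu_pos unfolding t_crit_def by (auto intro!: real_root_pos_pos)

lemma t_crit_pow: "t_crit ^ Suc m = real m * \<mu>"
  unfolding t_crit_def using mu_pos by (intro real_root_pow_pos2) auto

lemma g'_eq: "0 < t \<Longrightarrow> g' t = 1 - (t_crit / t) ^ Suc m"
  unfolding g'_def using t_crit_pow by (simp add: power_divide)

lemma g'_neg: "0 < t \<Longrightarrow> t < t_crit \<Longrightarrow> g' t < 0"
  using g'_eq one_less_power[of "t_crit / t" "Suc m"] by simp

lemma g'_pos: "t_crit < t \<Longrightarrow> 0 < g' t"
  using g'_eq t_crit_pos power_strict_mono[of "t_crit / t" 1 "Suc m"] by simp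

lemma g'_eq_0_iff: "0 < t \<Longrightarrow> g' t = 0 \<longleftrightarrow> t = t_crit"
  using g'_neg[of t] g'_pos[of t] g'_eq[of t_crit] t_crit_pos
  by (cases t t_crit rule: linorder_cases) auto

lemma g_strict_antimono:
  assumes "0 < x" "x < y" "y \<le> t_crit" shows "g y < g x"
proof (rule DERIV_neg_imp_decreasing_open[of x y g])
  fix t assume "x < t" "t < y"
  then show "\<exists>d. (g has_real_derivative d) (at t) \<and> d < 0"
    using g_has_derivative[of t] g'_neg[of t] assms by auto
qed (use assms g_continuous_on in auto)

lemma g_antimono: "0 < x \<Longrightarrow> x \<le> y \<Longrightarrow> y \<le> t_crit \<Longrightarrow> g y \<le> g x"
  using g_strict_antimono[of x y] by (cases "x = y") auto

lemma g_strict_mono: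
  assumes "t_crit \<le> x" "x < y" shows "g x < g y"
proof (rule DERIV_pos_imp_increasing_open[of x y g])
  fix t assume "x < t" "t < y"
  then show "\<exists>d. (g has_real_derivative d) (at t) \<and> 0 < d"
    using g_has_derivative[of t] g'_pos[of t] assms t_crit_pos by auto
qed (use assms t_crit_pos g_continuous_on in auto)

lemma t_crit_less: "t_crit < real m / real (Suc m)"
proof -
  have "real m * \<mu> < real m * (1 / real (Suc m) * (real m / real (Suc m)) ^ m)"
    using mu_bound m_pos by (intro mult_strict_left_mono) auto
  also have "\<dots> = (real m / real (Suc m)) ^ Suc m" by (simp add: field_simps)
  finally have "t_crit ^ Suc m < (real m / real (Suc m)) ^ Suc m" using t_crit_pow by simp
  then show ?thesis by (rule power_less_imp_less_base) auto
qed

text \<open>This is where the upper bound on \<open>\<mu>\<close> enters: it makes the minimum of \<open>g\<close>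
  smaller than \<open>1\<close>.\<close>

lemma g_t_crit_less_1: "g t_crit < 1"
proof -
  have "\<mu> / t_crit ^ m = t_crit / real m"
    using t_crit_pow t_crit_pos m_pos by (simp add: field_simps)
  then have "g t_crit = t_crit * (real (Suc m) / real m)"
    unfolding g_def using m_pos by (simp add: field_simps)
  also have "\<dots> < real m / real (Suc m) * (real (Suc m) / real m)"
    using t_crit_less m_pos by (intro mult_strict_right_mono) auto
  finally show ?thesis using m_pos by simp
qed

lemma mu_less_1: "\<mu> < 1"
proof -
  have "(real m / real (Suc m)) ^ m \<le> 1" by (intro power_le_one) auto
  then have "1 / real (Suc m) * (real m / real (Suc m)) ^ m \<le> 1 / real (Suc m) * 1"
    by (intro mult_left_mono) auto
  also have "\<dots> \<le> 1" by simp
  finally have "1 / real (Suc m) * (real m / real (Suc m)) ^ m \<le> 1" .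
  then show ?thesis using mu_bound by linarith
qed

lemma mu_less_t_crit: "\<mu> < t_crit"
proof -
  have "\<mu> ^ Suc m < \<mu> ^ 1" using mu_pos mu_less_1 m_pos by (intro power_strict_decreasing) auto
  also have "\<dots> \<le> real m * \<mu>" using m_pos mu_pos by simp
  finally have "\<mu> ^ Suc m < t_crit ^ Suc m" using t_crit_pow by simp
  then show ?thesis by (rule power_less_imp_less_base) (use t_crit_pos in auto)
qed

lemma g_mu_greater_1: "1 < g \<mu>"
proof -
  have "\<mu> ^ m \<le> \<mu> ^ 1" using mu_pos mu_less_1 m_pos by (intro power_decreasing) auto
  then have "1 \<le> \<mu> / \<mu> ^ m" using mu_pos by (simp add: le_divide_eq)
  then show ?thesis unfolding g_def using mu_pos by linarith
qed

lemma g_eq_1_iff_root: "0 < t \<Longrightarrow> g t = 1 \<longleftrightarrow> t ^ Suc m - t ^ (Suc m - 1) + \<mu> = 0"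
  unfolding g_def by (auto simp: field_simps)

lemma g_compare_1:
  assumes a: "0 < a" "a < t_crit" "g a = 1" and b: "t_crit < b" "g b = 1" and "0 < t"
  shows "t < a \<or> b < t \<Longrightarrow> 1 < g t" and "a < t \<Longrightarrow> t < b \<Longrightarrow> g t < 1"
proof -
  show "1 < g t" if "t < a \<or> b < t"
    using that g_strict_antimono[of t a] g_strict_mono[of b t] a b \<open>0 < t\<close> by auto
  show "g t < 1" if "a < t" "t < b"
  proof (cases "t \<le> t_crit")
    case True
    then show ?thesis using that g_strict_antimono[of a t] a by simp
  next
    case False
    then show ?thesis using that g_strict_mono[of t b] b by simp
  qed
qed

lemma a_lo_a_hi: "0 < a_lo" "a_lo < t_crit" "t_crit < a_hi" "g a_lo = 1" "g a_hi = 1"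
proof -
  have "t_crit < 1" using t_crit_less by (simp add: less_le_trans)
  obtain a where a: "\<mu> \<le> a" "a \<le> t_crit" "g a = 1"
    using IVT2'[of g t_crit 1 \<mu>] g_t_crit_less_1 g_mu_greater_1 mu_less_t_crit
      g_continuous_on[OF mu_pos, of t_crit] by auto
  obtain b where b: "t_crit \<le> b" "b \<le> 1" "g b = 1"
    using IVT'[of g t_crit 1 1] g_t_crit_less_1 \<open>t_crit < 1\<close> mu_pos
      g_continuous_on[OF t_crit_pos, of 1] by (auto simp: g_def)
  have a': "0 < a" "a < t_crit" and b': "t_crit < b"
    using a b mu_pos g_t_crit_less_1 by (auto simp: order.order_iff_strict)
  have "undul_roots (Suc m) \<mu> = {a, b}"
  proof -
    have "g t = 1 \<longleftrightarrow> t = a \<or> t = b" if "0 < t" for t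
    proof -
      consider "t < a \<or> b < t" | "a < t \<and> t < b" | "t = a \<or> t = b" by linarith
      then show ?thesis using g_compare_1[OF a' a(3) b' b(3) that] a(3) b(3) by cases auto
    qed
    then show ?thesis
      unfolding undul_roots_def using g_eq_1_iff_root a' b' by auto
  qed
  moreover have "a < b" using a' b' by simp
  ultimately have "a_lo = a" "a_hi = b"
    unfolding a_minus_def a_plus_def by (auto intro!: cInf_eq_minimum cSup_eq_maximum)
  then show "0 < a_lo" "a_lo < t_crit" "t_crit < a_hi" "g a_lo = 1" "g a_hi = 1"
    using a(3) b(3) a' b' by simp_all
qed

lemma g_less_1_iff:
  assumes "0 < t" shows "g t < 1 \<longleftrightarrow> a_lo < t \<and> t < a_hi"
proof -
  consider "t < a_lo \<or> a_hi < t" | "a_lo < t \<and> t < a_hi" | "t = a_lo \<or> t = a_hi" by linarith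
  then show ?thesis using g_compare_1[OF a_lo_a_hi(1,2,4) a_lo_a_hi(3,5) assms] a_lo_a_hi by cases auto
qed

lemma g_le_1_iff:
  assumes "0 < t" shows "g t \<le> 1 \<longleftrightarrow> a_lo \<le> t \<and> t \<le> a_hi"
proof -
  consider "t < a_lo \<or> a_hi < t" | "a_lo < t \<and> t < a_hi" | "t = a_lo \<or> t = a_hi" by linarith
  then show ?thesis using g_compare_1[OF a_lo_a_hi(1,2,4) a_lo_a_hi(3,5) assms] a_lo_a_hi by cases auto
qed

lemma F_lipschitz: obtains L where "L-lipschitz_on {a_lo..a_hi} F"
proof -
  define g'' where "g'' t = real m * (real m + 1) * \<mu> / t ^ Suc (Suc m)" for t
  define F' where "F' t = (3 * (g' t)^2 - g'' t * g t) / g t ^ 4" for t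
  have "(F has_real_derivative F' t) (at t)" if "t \<in> {a_lo..a_hi}" for t
  proof -
    have "0 < t" using that a_lo_a_hi by simp
    have g'': "(g' has_real_derivative g'' t) (at t)"
      unfolding g'_def[abs_def] g''_def using \<open>0 < t\<close>
      by (auto intro!: derivative_eq_intros simp: field_simps power2_eq_square power_pred_eq)
    have "g t \<noteq> 0" using g_pos[OF \<open>0 < t\<close>] by simp
    then show ?thesis
      unfolding F_def[abs_def] F'_def
      by (auto intro!: derivative_eq_intros g_has_derivative g'' \<open>0 < t\<close>
          simp: field_simps eval_nat_numeral)
  qed
  moreover have "continuous_on {a_lo..a_hi} F'"
  proof -
    have "\<mu> / t ^ m + t \<noteq> 0" "t \<noteq> 0" if "a_lo \<le> t" "t \<le> a_hi" for t
      using g_pos[of t] that a_lo_a_hi unfolding g_def by auto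
    then show ?thesis
      unfolding F'_def[abs_def] g''_def g_def g'_def by (intro continuous_intros) auto
  qed
  ultimately show ?thesis using lipschitz_on_interval_if_continuous_deriv that by blast
qed

end

section \<open>The unduloid profile\<close>

locale unduloid = undul_param +
  fixes f :: "real \<Rightarrow> real"
  assumes f': "\<And>x. (f has_real_derivative deriv f x) (at x)"
    and f'': "\<And>x. (deriv f has_real_derivative deriv (deriv f) x) (at x)"
    and f''_continuous: "continuous_on UNIV (deriv (deriv f))"
    and f_pos: "\<And>x. 0 < f x"
    and f_nonconst: "\<exists>x y. f x \<noteq> f y"
    and profile_ode: "\<And>x. \<mu> = f x ^ m / sqrt (1 + (deriv f x)^2) - f x ^ Suc m"
    and f_0: "f 0 = a_lo"
begin

abbreviation "p \<equiv> deriv f"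
abbreviation "q \<equiv> deriv (deriv f)"

lemma f_continuous_on: "continuous_on A f"
  using DERIV_isCont[OF f'] by (intro continuous_at_imp_continuous_on) blast

lemma p_continuous_on: "continuous_on A p"
  using DERIV_isCont[OF f''] by (intro continuous_at_imp_continuous_on) blast

lemma one_le_sqrt_slope: "1 \<le> sqrt (1 + (p x)^2)"
  by simp

lemma cos_angle_eq: "1 / sqrt (1 + (p x)^2) = g (f x)"
proof -
  define c where "c = 1 / sqrt (1 + (p x)^2)"
  have "\<mu> = f x ^ m * c - f x * f x ^ m" using profile_ode[of x] unfolding c_def by simp
  then have "c = \<mu> / f x ^ m + f x" using f_pos[of x] by (simp add: field_simps)
  then show ?thesis unfolding c_def g_def by simp
qed

lemma f_bounds: "a_lo \<le> f x" "f x \<le> a_hi"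
proof -
  have "g (f x) \<le> 1"
    using one_le_sqrt_slope[of x] by (simp add: divide_le_eq_1 add_pos_nonneg flip: cos_angle_eq)
  then show "a_lo \<le> f x" "f x \<le> a_hi" using g_le_1_iff[OF f_pos] by auto
qed

lemma p_eq_0_iff: "p x = 0 \<longleftrightarrow> f x = a_lo \<or> f x = a_hi"
proof -
  have "p x = 0 \<longleftrightarrow> g (f x) \<le> 1 \<and> \<not> g (f x) < 1"
    unfolding cos_angle_eq[symmetric] using one_le_sqrt_slope[of x]
    by (auto simp: add_nonneg_eq_0_iff divide_le_eq_1)
  also have "\<dots> \<longleftrightarrow> f x = a_lo \<or> f x = a_hi"
    using g_le_1_iff[OF f_pos[of x]] g_less_1_iff[OF f_pos[of x]] f_bounds[of x] by auto
  finally show ?thesis .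
qed

lemma undul_a_has_derivative:
  "(undul_a f has_real_derivative q x / ((1 + (p x)^2) * sqrt (1 + (p x)^2))) (at x)"
proof -
  have "0 < 1 + (p x)^2" by (simp add: add_pos_nonneg)
  then show ?thesis unfolding undul_a_def[abs_def]
    by (auto intro!: derivative_eq_intros f'' simp: field_simps power2_eq_square)
qed

lemma curvature_eq: "q x / ((1 + (p x)^2) * sqrt (1 + (p x)^2)) = - g' (f x)"
proof -
  define h where "h x = q x / ((1 + (p x)^2) * sqrt (1 + (p x)^2)) + g' (f x)" for x
  have cofactor: "p x * h x = 0" for x
  proof -
    have "0 < 1 + (p x)^2" by (simp add: add_pos_nonneg)
    then have "((\<lambda>x. 1 / sqrt (1 + (p x)^2)) has_real_derivative
        - (p x * q x) / ((1 + (p x)^2) * sqrt (1 + (p x)^2))) (at x)"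
      by (auto intro!: derivative_eq_intros f'' simp: field_simps power2_eq_square)
    moreover have "((\<lambda>x. g (f x)) has_real_derivative g' (f x) * p x) (at x)"
      by (rule DERIV_chain2[OF g_has_derivative[OF f_pos] f'])
    moreover have "(\<lambda>x. 1 / sqrt (1 + (p x)^2)) = (\<lambda>x. g (f x))"
      using cos_angle_eq by simp
    ultimately have "- (p x * q x) / ((1 + (p x)^2) * sqrt (1 + (p x)^2)) = g' (f x) * p x"
      using DERIV_unique by metis
    then show ?thesis unfolding h_def by (simp add: field_simps)
  qed
  have "continuous_on UNIV h"
  proof -
    have "(1 + (p x)^2) * sqrt (1 + (p x)^2) \<noteq> 0" "f x ^ Suc m \<noteq> 0" for x
      using f_pos[of x] by (auto simp: add_nonneg_eq_0_iff)
    then show ?thesis unfolding h_def[abs_def] g'_def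
      by (intro continuous_intros f_continuous_on p_continuous_on f''_continuous) auto
  qed
  moreover have "h x = g' (f x)" if "p x = 0" "q x = 0" for x
    using that by (simp add: h_def)
  moreover obtain y where "f y \<noteq> f x" using f_nonconst by metis
  ultimately have "h x = 0" using continuous_cofactor_vanishes[OF f' f''] cofactor by blast
  then show ?thesis unfolding h_def by simp
qed

lemma deriv_undul_a: "deriv (undul_a f) x = - g' (f x)"
  using DERIV_imp_deriv[OF undul_a_has_derivative] curvature_eq by simp

lemma q_eq: "q x = F (f x)"
proof -
  define s where "s = sqrt (1 + (p x)^2)"
  have "0 < s" "1 + (p x)^2 = s^2" unfolding s_def by (simp_all add: add_pos_nonneg)
  then have "q x = - g' (f x) * s^3"
    using curvature_eq[of x] unfolding s_def[symmetric]
    by (simp add: divide_eq_eq power3_eq_cube power2_eq_square)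
  moreover have "g (f x) = 1 / s" using cos_angle_eq unfolding s_def by simp
  ultimately show ?thesis unfolding F_def using \<open>0 < s\<close> by (simp add: power_one_over)
qed

lemma p_has_derivative: "(p has_real_derivative F (f x)) (at x)"
  using f'' q_eq by simp

lemma q_le: "0 \<le> g' (f x) \<Longrightarrow> q x \<le> - g' (f x)"
proof -
  assume "0 \<le> g' (f x)"
  define w where "w = (1 + (p x)^2) * sqrt (1 + (p x)^2)"
  have "1 \<le> w"
    using mult_mono[of 1 "1 + (p x)^2" 1 "sqrt (1 + (p x)^2)"] unfolding w_def by simp
  then have "q x = - g' (f x) * w" using curvature_eq[of x] unfolding w_def[symmetric]
    by (simp add: divide_eq_eq)
  then show ?thesis using mult_left_mono[OF \<open>1 \<le> w\<close> \<open>0 \<le> g' (f x)\<close>] by simp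
qed

lemma undul_a_jacobi:
  "rot_laplacian (Suc m) f (undul_a f) x - undul_V (Suc m) \<mu> f x * undul_a f x = 0"
proof -
  define \<Phi> where "\<Phi> y = (\<mu> + f y ^ Suc m) * (real m * \<mu> / f y ^ Suc m - 1)" for y
  have flux: "(\<lambda>y. f y ^ (Suc m - 1) / sqrt (1 + (p y)^2) * deriv (undul_a f) y) = \<Phi>"
  proof
    fix y
    have "f y ^ m / sqrt (1 + (p y)^2) = f y ^ m * g (f y)"
      using cos_angle_eq[of y] by (simp add: divide_inverse)
    also have "\<dots> = \<mu> + f y ^ Suc m" unfolding g_def using f_pos[of y] by (simp add: field_simps)
    finally show "f y ^ (Suc m - 1) / sqrt (1 + (p y)^2) * deriv (undul_a f) y = \<Phi> y"
      unfolding \<Phi>_def deriv_undul_a g'_def by simp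
  qed
  have "f x \<noteq> 0" using f_pos[of x] by simp
  then have "(\<Phi> has_real_derivative
      - real (Suc m) * p x * (f x ^ m + real m * \<mu>^2 / f x ^ Suc (Suc m))) (at x)"
    unfolding \<Phi>_def[abs_def]
    by (auto intro!: derivative_eq_intros f' simp: field_simps power2_eq_square power_pred_eq)
  then have "deriv \<Phi> x = - real (Suc m) * p x * (f x ^ m + real m * \<mu>^2 / f x ^ Suc (Suc m))"
    by (rule DERIV_imp_deriv)
  moreover have "f x ^ (2 * Suc m) = f x ^ Suc m * f x ^ Suc m" by (simp add: mult_2 power_add)
  moreover have "0 < sqrt (1 + (p x)^2)" using one_le_sqrt_slope[of x] by linarith
  ultimately show ?thesis
    unfolding rot_laplacian_def undul_V_def flux undul_a_def using \<open>f x \<noteq> 0\<close>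
    by (simp add: field_simps power2_eq_square)
qed

lemma reflection:
  assumes "p c = 0"
  shows "f (2 * c - x) = f x" and "p (2 * c - x) = - p x"
proof -
  obtain L where L: "L-lipschitz_on {a_lo..a_hi} F" by (rule F_lipschitz)
  have refl: "((\<lambda>x. 2 * c - x) has_real_derivative -1) (at x)" for x
    by (auto intro!: derivative_eq_intros)
  have f_refl: "((\<lambda>x. f (2 * c - x)) has_real_derivative - p (2 * c - x)) (at x)" for x
    using DERIV_chain2[OF f' refl] by simp
  have p_refl: "((\<lambda>x. - p (2 * c - x)) has_real_derivative F (f (2 * c - x))) (at x)" for x
    using DERIV_minus[OF DERIV_chain2[OF p_has_derivative refl]] by simp
  have range: "f x \<in> {a_lo..a_hi}" "f (2 * c - x) \<in> {a_lo..a_hi}" for x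
    using f_bounds by auto
  have "f x = f (2 * c - x) \<and> p x = - p (2 * c - x)"
    by (rule autonomous_second_order_unique[OF f' p_has_derivative f_refl p_refl range L, where a = c])
      (use assms in simp_all)
  then show "f (2 * c - x) = f x" "p (2 * c - x) = - p x" by auto
qed

section \<open>Half period and periodicity\<close>

lemma p_0: "p 0 = 0"
  using p_eq_0_iff f_0 by simp

lemma f_even: "f (- x) = f x"
  using reflection(1)[OF p_0, of x] by simp

lemma p_pos_right_of_0:
  obtains d where "0 < d" "\<And>t. 0 < t \<Longrightarrow> t \<le> d \<Longrightarrow> 0 < p t"
proof -
  have "0 < q 0" using curvature_eq[of 0] p_0 f_0 g'_neg[OF a_lo_a_hi(1,2)] by simp
  then obtain d where "0 < d" "\<And>h. 0 < h \<Longrightarrow> h < d \<Longrightarrow> p 0 < p (0 + h)"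
    using DERIV_pos_inc_right[OF f''] by blast
  then show ?thesis using p_0 by (intro that[of "d / 2"]) auto
qed

lemma f_strict_mono_if_p_pos:
  assumes "a < b" "\<And>t. a < t \<Longrightarrow> t < b \<Longrightarrow> 0 < p t"
  shows "f a < f b"
  using assms f' f_continuous_on by (intro DERIV_pos_imp_increasing_open[of a b f]) blast+

lemma p_zero_between:
  "a \<le> b \<Longrightarrow> 0 \<le> p a \<Longrightarrow> p b \<le> 0 \<Longrightarrow> \<exists>w. a \<le> w \<and> w \<le> b \<and> p w = 0"
  using IVT2'[of p b 0 a] p_continuous_on by blast

lemma f_mono_if_p_pos:
  assumes "a \<le> b" "\<And>t. a < t \<Longrightarrow> t < b \<Longrightarrow> 0 < p t"
  shows "f a \<le> f b"
  using f_strict_mono_if_p_pos[of a b] assms by (cases "a = b") auto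

text \<open>If \<open>f'\<close> stayed positive on \<open>(0, \<infinity>)\<close>, then either \<open>f\<close> would pass \<open>t_crit\<close>, after
  which \<open>f'' \<le> - g' (f x\<^sub>0) < 0\<close> drives \<open>f'\<close> negative, or \<open>f\<close> would stay below \<open>t_crit\<close>,
  where \<open>g (f) \<le> g (f 1) < 1\<close> bounds \<open>f'\<close> away from zero and \<open>f\<close> would exceed \<open>a_hi\<close>.\<close>

lemma below_t_crit_if_p_pos:
  assumes p_pos: "\<And>t. 0 < t \<Longrightarrow> 0 < p t" and "0 < x\<^sub>0"
  shows "f x\<^sub>0 \<le> t_crit"
proof (rule ccontr)
  assume "\<not> f x\<^sub>0 \<le> t_crit"
  then have "0 < g' (f x\<^sub>0)" by (simp add: g'_pos)
  have "\<exists>x\<ge>x\<^sub>0. 0 < - p x"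
  proof (rule unbounded_if_deriv_ge_pos)
    show "((\<lambda>x. - p x) has_real_derivative - q x) (at x)" for x
      using f'' by (rule DERIV_minus)
    show "g' (f x\<^sub>0) \<le> - q x" if "x\<^sub>0 \<le> x" for x
    proof -
      have "g' (f x\<^sub>0) \<le> g' (f x)"
        using g'_mono f_pos f_mono_if_p_pos[of x\<^sub>0 x] p_pos \<open>0 < x\<^sub>0\<close> that by simp
      then show ?thesis using q_le[of x] \<open>0 < g' (f x\<^sub>0)\<close> by simp
    qed
  qed (fact \<open>0 < g' (f x\<^sub>0)\<close>)
  then obtain x where "x\<^sub>0 \<le> x" "p x < 0" by auto
  then show False using p_pos[of x] \<open>0 < x\<^sub>0\<close> by simp
qed

lemma p_not_pos_everywhere: "\<exists>t>0. p t \<le> 0"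
proof (rule ccontr)
  assume "\<not> ?thesis"
  then have p_pos: "0 < p t" if "0 < t" for t using that by force
  have "a_lo < f 1" using f_strict_mono_if_p_pos[of 0 1] p_pos f_0 by simp
  define \<gamma> where "\<gamma> = g (f 1)"
  have "0 < \<gamma>" "\<gamma> < 1"
    unfolding \<gamma>_def using g_pos[OF f_pos] g_less_1_iff[OF f_pos] \<open>a_lo < f 1\<close>
      below_t_crit_if_p_pos[OF p_pos, of 1] a_lo_a_hi by auto
  have "\<exists>x\<ge>1. a_hi < f x"
  proof (rule unbounded_if_deriv_ge_pos)
    show "(f has_real_derivative p x) (at x)" for x by (rule f')
    show "sqrt (1 / \<gamma>^2 - 1) \<le> p x" if "1 \<le> x" for x
    proof -
      have "g (f x) \<le> \<gamma>"
        unfolding \<gamma>_def using g_antimono f_pos f_mono_if_p_pos[of 1 x] p_pos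
          below_t_crit_if_p_pos[OF p_pos, of x] that by simp
      moreover have "0 < sqrt (1 + (p x)^2)" using one_le_sqrt_slope[of x] by linarith
      ultimately have "1 \<le> \<gamma> * sqrt (1 + (p x)^2)"
        by (simp add: divide_le_eq mult.commute flip: cos_angle_eq)
      then have "1 / \<gamma> \<le> sqrt (1 + (p x)^2)"
        using \<open>0 < \<gamma>\<close> by (simp add: divide_le_eq mult.commute)
      then have "(1 / \<gamma>)^2 \<le> 1 + (p x)^2"
        using \<open>0 < \<gamma>\<close> power_mono[of "1 / \<gamma>" _ 2] by fastforce
      then have "1 / \<gamma>^2 - 1 \<le> (p x)^2" by (simp add: power_divide)
      then have "sqrt (1 / \<gamma>^2 - 1) \<le> sqrt ((p x)^2)" by (rule real_sqrt_le_mono)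
      then show ?thesis using p_pos[of x] that by simp
    qed
    show "0 < sqrt (1 / \<gamma>^2 - 1)"
      using \<open>0 < \<gamma>\<close> \<open>\<gamma> < 1\<close> by (simp add: power_less_one_iff less_divide_eq power_strict_mono)
  qed
  then obtain x where "a_hi < f x" by blast
  then show False using f_bounds(2)[of x] by simp
qed

definition half_period :: real where "half_period = Inf {t. 0 < t \<and> p t = 0}"

lemma half_period: "0 < half_period" "p half_period = 0"
  and p_pos_before_half_period: "\<And>t. 0 < t \<Longrightarrow> t < half_period \<Longrightarrow> 0 < p t"
proof -
  obtain d where d: "0 < d" "\<And>t. 0 < t \<Longrightarrow> t \<le> d \<Longrightarrow> 0 < p t"
    using p_pos_right_of_0 by blast
  have "0 < p d" using d by simp
  have beyond_d: "d < t" if "0 < t" "p t \<le> 0" for t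
    using d(2)[of t] that by (cases "t \<le> d") auto
  define Z where "Z = {t. 0 < t \<and> p t = 0}"
  have Z_eq: "Z = {t. d \<le> t \<and> p t = 0}"
  proof (intro set_eqI iffI)
    fix t assume "t \<in> Z"
    then show "t \<in> {t. d \<le> t \<and> p t = 0}" using beyond_d[of t] unfolding Z_def by auto
  next
    fix t assume "t \<in> {t. d \<le> t \<and> p t = 0}"
    then show "t \<in> Z" using d(1) unfolding Z_def by auto
  qed
  have "closed Z"
    unfolding Z_eq by (intro closed_Collect_conj closed_Collect_le closed_Collect_eq
        continuous_on_const continuous_on_id p_continuous_on)
  moreover have "Z \<noteq> {}"
  proof -
    obtain t where "0 < t" "p t \<le> 0" using p_not_pos_everywhere by blast
    then obtain w where "d \<le> w" "p w = 0"
      using p_zero_between[of d t] beyond_d[of t] \<open>0 < p d\<close> by auto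
    then show ?thesis unfolding Z_eq by blast
  qed
  moreover have "bdd_below Z" unfolding Z_def by (rule bdd_belowI[of _ 0]) auto
  ultimately have "half_period \<in> Z" unfolding half_period_def Z_def[symmetric]
    by (rule closed_contains_Inf[rotated 2])
  then show "0 < half_period" "p half_period = 0" unfolding Z_def by auto
  have lower: "half_period \<le> w" if "w \<in> Z" for w
    unfolding half_period_def Z_def[symmetric] by (rule cInf_lower[OF that \<open>bdd_below Z\<close>])
  show "0 < p t" if "0 < t" "t < half_period" for t
  proof -
    have "\<not> p t < 0"
    proof
      assume "p t < 0"
      then obtain w where "d \<le> w" "w \<le> t" "p w = 0"
        using p_zero_between[of d t] beyond_d[of t] \<open>0 < p d\<close> \<open>0 < t\<close> by auto
      then show False using lower[of w] \<open>t < half_period\<close> unfolding Z_eq by auto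
    qed
    moreover have "p t \<noteq> 0" using lower[of t] that unfolding Z_def by auto
    ultimately show ?thesis by simp
  qed
qed

lemma f_strict_mono_on_half_period:
  "0 \<le> x \<Longrightarrow> x < y \<Longrightarrow> y \<le> half_period \<Longrightarrow> f x < f y"
  by (rule f_strict_mono_if_p_pos) (auto intro: p_pos_before_half_period)

lemma f_half_period: "f half_period = a_hi"
  using p_eq_0_iff[of half_period] half_period f_strict_mono_on_half_period[of 0 half_period] f_0
  by auto

lemma f_periodic: "f (x + 2 * half_period) = f x"
  using reflection(1)[OF half_period(2), of "- x"] f_even by (simp add: algebra_simps)

lemma p_periodic: "p (x + 2 * half_period) = p x"
  using reflection(2)[OF half_period(2), of "- x"] reflection(2)[OF p_0, of x]
  by (simp add: algebra_simps)

lemma p_neg: "half_period < y \<Longrightarrow> y < 2 * half_period \<Longrightarrow> p y < 0"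
  using reflection(2)[OF half_period(2), of y] p_pos_before_half_period[of "2 * half_period - y"]
  by simp

lemma p_eq_0_iff_multiple: "p x = 0 \<longleftrightarrow> (\<exists>k::int. x = of_int k * half_period)"
proof
  assume "p x = 0"
  define j where "j = \<lfloor>x / (2 * half_period)\<rfloor>"
  define y where "y = x - of_int j * (2 * half_period)"
  have T: "0 < 2 * half_period" using half_period by simp
  have "0 \<le> y" unfolding y_def j_def using floor_divide_lower[OF T, of x] by simp
  moreover have "y < 2 * half_period"
    unfolding y_def j_def using floor_divide_upper[OF T, of x] by (simp add: algebra_simps)
  moreover have "p y = 0"
    using periodic_of_int[of p, OF p_periodic, of y j] \<open>p x = 0\<close> unfolding y_def by simp
  ultimately have "y = 0 \<or> y = half_period"
    using p_pos_before_half_period[of y] p_neg[of y]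
    by (cases "y = 0"; cases y half_period rule: linorder_cases) auto
  then have "x = of_int (2 * j) * half_period \<or> x = of_int (2 * j + 1) * half_period"
    unfolding y_def by (auto simp: algebra_simps)
  then show "\<exists>k::int. x = of_int k * half_period" by blast
next
  assume "\<exists>k::int. x = of_int k * half_period"
  then obtain k :: int where k: "x = of_int k * half_period" by blast
  consider j where "k = 2 * j" | j where "k = 2 * j + 1" by (metis oddE evenE)
  then show "p x = 0"
  proof cases
    case 1
    then show ?thesis
      using periodic_of_int[of p, OF p_periodic, of 0 j] p_0 k by (simp add: algebra_simps)
  next
    case 2
    then show ?thesis
      using periodic_of_int[of p, OF p_periodic, of half_period j] half_period(2) k
      by (simp add: algebra_simps)
  qed
qed

lemma undul_period_eq: "undul_period f = 2 * half_period"
  unfolding undul_period_def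
proof (rule cInf_eq_minimum)
  have "f (2 * half_period) = a_lo" using f_periodic[of 0] f_0 by simp
  then show "2 * half_period \<in> {t. 0 < t \<and> is_local_min f t}"
    unfolding is_local_min_def using f_bounds half_period by (auto intro!: exI[of _ 1])
next
  fix t assume t: "t \<in> {t. 0 < t \<and> is_local_min f t}"
  show "2 * half_period \<le> t"
  proof (rule ccontr)
    assume "\<not> 2 * half_period \<le> t"
    obtain e where e: "0 < e" "\<And>y. \<bar>y - t\<bar> < e \<Longrightarrow> f t \<le> f y"
      using t unfolding is_local_min_def by blast
    have "p t = 0"
      using DERIV_local_min[OF f' e(1)] e(2) by (simp add: abs_minus_commute)
    then have "t = half_period"
      using t \<open>\<not> 2 * half_period \<le> t\<close> p_pos_before_half_period[of t] p_neg[of t]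
      by (cases t half_period rule: linorder_cases) auto
    define y where "y = half_period - min e half_period / 2"
    have "\<bar>y - t\<bar> < e" "0 \<le> y" "y < half_period"
      unfolding y_def using \<open>t = half_period\<close> e(1) half_period(1) by auto
    then show False
      using e(2)[of y] f_strict_mono_on_half_period[of y half_period] \<open>t = half_period\<close> by simp
  qed
qed

lemma undul_a_eq_0_iff: "undul_a f x = 0 \<longleftrightarrow> (\<exists>k::int. x = of_int k * undul_period f / 2)"
proof -
  have "undul_a f x = 0 \<longleftrightarrow> p x = 0"
    unfolding undul_a_def by (simp add: add_nonneg_eq_0_iff)
  then show ?thesis unfolding p_eq_0_iff_multiple undul_period_eq by simp
qed

lemma critical_points_of_undul_a:
  "\<exists>z1 z2. 0 < z1 \<and> z1 < undul_period f / 2 \<and> undul_period f / 2 < z2 \<and> z2 < undul_period f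
     \<and> {z \<in> {0..undul_period f}. deriv (undul_a f) z = 0} = {z1, z2}"
proof -
  have crit_iff: "deriv (undul_a f) z = 0 \<longleftrightarrow> f z = t_crit" for z
    unfolding deriv_undul_a using g'_eq_0_iff[OF f_pos[of z]] by simp
  obtain z1 where z1: "0 \<le> z1" "z1 \<le> half_period" "f z1 = t_crit"
    using IVT'[of f 0 t_crit half_period] f_0 f_half_period a_lo_a_hi half_period(1) f_continuous_on
    by fastforce
  have "z1 \<noteq> 0" "z1 \<noteq> half_period" using z1 f_0 f_half_period a_lo_a_hi by auto
  have unique: "z = z1" if "0 \<le> z" "z \<le> half_period" "f z = t_crit" for z
    using f_strict_mono_on_half_period[of z z1] f_strict_mono_on_half_period[of z1 z] that z1
    by (cases z z1 rule: linorder_cases) auto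
  define z2 where "z2 = 2 * half_period - z1"
  have "{z \<in> {0..2 * half_period}. f z = t_crit} = {z1, z2}"
  proof (intro set_eqI iffI)
    fix z assume z: "z \<in> {z \<in> {0..2 * half_period}. f z = t_crit}"
    have "f (2 * half_period - z) = t_crit" using reflection(1)[OF half_period(2), of z] z by simp
    then show "z \<in> {z1, z2}"
      using unique[of z] unique[of "2 * half_period - z"] z unfolding z2_def
      by (cases "z \<le> half_period") auto
  next
    fix z assume "z \<in> {z1, z2}"
    then show "z \<in> {z \<in> {0..2 * half_period}. f z = t_crit}"
      using z1 reflection(1)[OF half_period(2), of z1] unfolding z2_def by auto
  qed
  then show ?thesis unfolding undul_period_eq crit_iff
    using z1 \<open>z1 \<noteq> 0\<close> \<open>z1 \<noteq> half_period\<close> unfolding z2_def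
    by (intro exI[of _ z1] exI[of _ z2]) (auto simp: z2_def)
qed

end

theorem lemma3p2:
  fixes n :: nat and \<mu> :: real and f :: "real \<Rightarrow> real"
  assumes n: "n \<ge> 2"
    and mu_pos: "0 < \<mu>"
    and mu_bound: "\<mu> < (1 / real n) * ((real n - 1) / real n) ^ (n - 1)"
    and smooth: "\<And>k x. ((deriv ^^ k) f) differentiable (at x)"
    and pos: "\<And>x. f x > 0"
    and nonconst: "\<exists>x y. f x \<noteq> f y"
    and ode: "\<And>x. \<mu> = (f x) ^ (n - 1) / sqrt (1 + (deriv f x)^2) - (f x) ^ n"
    and f0: "f 0 = a_minus n \<mu>"
  shows "(\<forall>x. rot_laplacian n f (undul_a f) x - undul_V n \<mu> f x * undul_a f x = 0)
    \<and> (\<forall>x. undul_a f x = 0 \<longleftrightarrow> (\<exists>k::int. x = real_of_int k * undul_period f / 2))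
    \<and> (\<exists>z1 z2. 0 < z1 \<and> z1 < undul_period f / 2 \<and> undul_period f / 2 < z2
          \<and> z2 < undul_period f
          \<and> {z \<in> {0..undul_period f}. deriv (undul_a f) z = 0} = {z1, z2})"
proof -
  obtain m where n_eq: "n = Suc m" and "1 \<le> m" using n by (cases n) auto
  interpret unduloid m \<mu> f
  proof
    show "1 \<le> m" "0 < \<mu>" by fact+
    show "\<mu> < 1 / real (Suc m) * (real m / real (Suc m)) ^ m" using mu_bound n_eq by simp
    show "(f has_real_derivative deriv f x) (at x)" for x
      using smooth[of 0 x] by (simp add: DERIV_deriv_iff_real_differentiable)
    show "(deriv f has_real_derivative deriv (deriv f) x) (at x)" for x
      using smooth[of 1 x] by (simp add: DERIV_deriv_iff_real_differentiable)
    have "isCont (deriv (deriv f)) x" for x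
      using smooth[of 2 x] by (simp add: numeral_2_eq_2 differentiable_imp_continuous_within)
    then show "continuous_on UNIV (deriv (deriv f))" by (simp add: continuous_at_imp_continuous_on)
    show "\<mu> = f x ^ m / sqrt (1 + (deriv f x)^2) - f x ^ Suc m" for x using ode[of x] n_eq by simp
    show "f 0 = a_minus (Suc m) \<mu>" using f0 n_eq by simp
  qed (use pos nonconst in auto)
  show ?thesis
    unfolding n_eq using undul_a_jacobi undul_a_eq_0_iff critical_points_of_undul_a by blast
qed

end
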